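(* For every integer $k\geq 0$, every $(2k+1)$-strong tournament is $(k+2)^{*}$-weakly connected.
   Context: A tournament is a digraph in which each pair of distinct vertices is joined by exactly one arc. A digraph is $m$-strong if it has more than $m$ vertices and remains strongly connected after deleting any set of fewer than $m$ vertices (equivalently, for each ordered pair $x,y$ there are $m$ internally disjoint $(x,y)$-paths). For distinct vertices $u,v$ of a digraph $D$, a weak $k^{*}$-container between $u$ and $v$ is a set of $k$ internally disjoint paths, each of which is either a $(u,v)$-path or a $(v,u)$-path (different paths may have different directions), whose union contains every vertex of $D$. $D$ is $k^{*}$-weakly connected if there is a weak $k^{*}$-container between every two distinct vertices of $D$. *)

theory Defs
  imports Main
begin

definition tournament :: "'a set \<Rightarrow> ('a \<times> 'a) set \<Rightarrow> bool" where
  "tournament V A \<longleftrightarrow> finite V \<and> A \<subseteq> V \<times> V \<and> (\<forall>x. (x, x) \<notin> A) \<and>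
     (\<forall>x\<in>V. \<forall>y\<in>V. x \<noteq> y \<longrightarrow> ((x, y) \<in> A \<longleftrightarrow> (y, x) \<notin> A))"

definition is_path :: "'a set \<Rightarrow> ('a \<times> 'a) set \<Rightarrow> 'a list \<Rightarrow> bool" where
  "is_path V A p \<longleftrightarrow> p \<noteq> [] \<and> distinct p \<and> set p \<subseteq> V \<and>
     (\<forall>i. Suc i < length p \<longrightarrow> (p ! i, p ! Suc i) \<in> A)"

definition is_path_from_to :: "'a set \<Rightarrow> ('a \<times> 'a) set \<Rightarrow> 'a list \<Rightarrow> 'a \<Rightarrow> 'a \<Rightarrow> bool" where
  "is_path_from_to V A p x y \<longleftrightarrow> is_path V A p \<and> hd p = x \<and> last p = y"

definition internal :: "'a list \<Rightarrow> 'a set" where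
  "internal p = set (butlast (tl p))"

definition strongly_connected :: "'a set \<Rightarrow> ('a \<times> 'a) set \<Rightarrow> bool" where
  "strongly_connected V A \<longleftrightarrow>
     (\<forall>x\<in>V. \<forall>y\<in>V. \<exists>p. is_path_from_to V (A \<inter> (V \<times> V)) p x y)"

definition m_strong :: "nat \<Rightarrow> 'a set \<Rightarrow> ('a \<times> 'a) set \<Rightarrow> bool" where
  "m_strong m V A \<longleftrightarrow> card V > m \<and>
     (\<forall>S. S \<subseteq> V \<longrightarrow> card S < m \<longrightarrow> strongly_connected (V - S) A)"

definition weak_container :: "nat \<Rightarrow> 'a set \<Rightarrow> ('a \<times> 'a) set \<Rightarrow> 'a \<Rightarrow> 'a \<Rightarrow> 'a list list \<Rightarrow> bool" where
  "weak_container k V A u v Ps \<longleftrightarrow> length Ps = k \<and> distinct Ps \<and>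
     (\<forall>p\<in>set Ps. is_path_from_to V A p u v \<or> is_path_from_to V A p v u) \<and>
     (\<forall>i<k. \<forall>j<k. i \<noteq> j \<longrightarrow> internal (Ps ! i) \<inter> internal (Ps ! j) = {}) \<and>
     V \<subseteq> (\<Union>p\<in>set Ps. set p)"

definition weakly_star_connected :: "nat \<Rightarrow> 'a set \<Rightarrow> ('a \<times> 'a) set \<Rightarrow> bool" where
  "weakly_star_connected k V A \<longleftrightarrow>
     (\<forall>u\<in>V. \<forall>v\<in>V. u \<noteq> v \<longrightarrow> (\<exists>Ps. weak_container k V A u v Ps))"

end

theory Submission
  imports Defs
begin

text \<open>Fix an arc \<open>u \<rightarrow> v\<close>. Deleting the at most \<open>2k\<close> internal vertices of previously
  chosen paths leaves the tournament strongly connected, and an arc of a \<open>(v,u)\<close>-path leaving the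
  common out-neighbourhood of \<open>u\<close> and \<open>v\<close> yields a new \<open>(u,v)\<close>- or \<open>(v,u)\<close>-path with one or two
  internal vertices. So the arc \<open>uv\<close> and \<open>k + 1\<close> such short paths form \<open>k + 2\<close> internally
  disjoint paths, and we may take one of them to be a \<open>(v,u)\<close>-path whenever \<open>v \<rightarrow> w \<rightarrow> u\<close> for some \<open>w\<close>
  (the arc \<open>uv\<close> serves the case \<open>u \<rightarrow> w \<rightarrow> v\<close>).

  The remaining vertices are then absorbed while keeping the ends of all paths. A vertex \<open>z\<close> with
  \<open>p\<^sub>a \<rightarrow> z \<rightarrow> p\<^sub>b\<close>, \<open>a < b\<close>, on some path \<open>p\<close> fits between two consecutive vertices of \<open>p\<close>.
  If no uncovered vertex fits anywhere, the choice of the ends rules out \<open>u \<rightarrow> z \<rightarrow> v\<close> and \<open>v \<rightarrow> z \<rightarrow> u\<close>, so every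
  uncovered vertex is dominated by all covered vertices or dominates all of them; strong connectivity
  gives an arc \<open>x \<rightarrow> y\<close> from the first kind to the second, and \<open>x, y\<close> fit after the first vertex of
  any path.\<close>

definition ends :: "'a list \<Rightarrow> 'a \<times> 'a" where
  "ends p = (hd p, last p)"

lemma is_path_iff_successively:
  "is_path V A p \<longleftrightarrow> p \<noteq> [] \<and> distinct p \<and> set p \<subseteq> V \<and> successively (\<lambda>x y. (x, y) \<in> A) p"
  unfolding is_path_def successively_conv_nth by auto

lemma internal_eq:
  assumes "distinct p" "p \<noteq> []"
  shows "internal p = set p - {hd p, last p}"
proof (cases "tl p = []")
  case True
  with assms(2) show ?thesis by (cases p) (auto simp: internal_def)
next
  case False
  with assms(2) obtain a m b where "p = a # m @ [b]"
    by (metis append_butlast_last_id list.collapse)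
  with assms(1) show ?thesis by (auto simp: internal_def)
qed

lemma internal_extended_path:
  assumes "is_path V A q" "is_path V A p" "ends p = ends q" "set p = set q \<union> B" "B \<inter> set q = {}"
  shows "internal p = internal q \<union> B"
  using assms by (auto simp: internal_eq is_path_def ends_def)

lemma internal_subset: "internal p \<subseteq> set p"
  unfolding internal_def by (cases p) (auto dest: in_set_butlastD)

lemma nat_crossing:
  assumes "P i" "\<not> P j" "i \<le> j"
  shows "\<exists>l. i \<le> l \<and> l < j \<and> P l \<and> \<not> P (Suc l)"
  using assms(3,2)
proof (induction j rule: dec_induct)
  case base
  with assms(1) show ?case by simp
next
  case (step j)
  then show ?case by (cases "P j") (auto intro: less_SucI)
qed

lemma distinct_concat_nth_disjoint:
  "distinct (concat xs) \<Longrightarrow> i < length xs \<Longrightarrow> j < length xs \<Longrightarrow> i \<noteq> j \<Longrightarrow>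
    set (xs ! i) \<inter> set (xs ! j) = {}"
proof (induction xs arbitrary: i j)
  case (Cons x xs)
  have "set x \<inter> set (xs ! l) = {}" if "l < length xs" for l
    using Cons.prems(1) nth_mem[OF that] by auto
  with Cons show ?case
    by (cases i; cases j) auto
qed simp

lemma strongly_connected_arc_leaving:
  assumes "strongly_connected W A" "x \<in> W" "y \<in> W" "x \<in> X" "y \<notin> X"
  shows "\<exists>a b. a \<in> W \<inter> X \<and> b \<in> W - X \<and> (a, b) \<in> A"
proof -
  obtain p where p: "is_path_from_to W (A \<inter> W \<times> W) p x y"
    using assms(1-3) unfolding strongly_connected_def by blast
  then have "p \<noteq> []" "p ! 0 \<in> X" "p ! (length p - 1) \<notin> X"
    using assms(4,5) by (auto simp: is_path_from_to_def is_path_def hd_conv_nth last_conv_nth)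
  then obtain l where "l < length p - 1" "p ! l \<in> X" "p ! Suc l \<notin> X"
    using nat_crossing[of "\<lambda>l. p ! l \<in> X" 0 "length p - 1"] by auto
  moreover from this(1) have "Suc l < length p" by arith
  with p have "(p ! l, p ! Suc l) \<in> A \<inter> W \<times> W"
    unfolding is_path_from_to_def is_path_def by blast
  ultimately show ?thesis by blast
qed

lemma m_strong_strongly_connected: "m_strong (Suc m) V A \<Longrightarrow> strongly_connected V A"
  unfolding m_strong_def by (metis Diff_empty card.empty empty_subsetI zero_less_Suc)

lemma is_path_insert_block:
  assumes p: "is_path V A p" and i: "Suc i < length p" and B: "is_path V A B"
    and disj: "set B \<inter> set p = {}"
    and arcs: "(p ! i, hd B) \<in> A" "(last B, p ! Suc i) \<in> A"
  shows "\<exists>p'. is_path V A p' \<and> ends p' = ends p \<and> set p' = set p \<union> set B"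
proof -
  let ?x = "take (Suc i) p" and ?y = "drop (Suc i) p"
  have split: "p = ?x @ ?y" by simp
  have "?x \<noteq> []" "?y \<noteq> []" "B \<noteq> []" using i B by (auto simp: is_path_def)
  moreover have "last ?x = p ! i" "hd ?y = p ! Suc i"
    using i by (simp_all add: take_Suc_conv_app_nth hd_drop_conv_nth)
  moreover have "successively (\<lambda>x y. (x, y) \<in> A) ?x" "successively (\<lambda>x y. (x, y) \<in> A) ?y"
    using p split unfolding is_path_iff_successively by (metis successively_append_iff)+
  moreover have "distinct ?x" "distinct ?y" "set ?x \<inter> set ?y = {}"
    using p split unfolding is_path_def by (metis distinct_append)+
  moreover have "set p = set ?x \<union> set ?y" by (metis split set_append)
  ultimately have "is_path V A (?x @ B @ ?y)"
    using p B disj arcs unfolding is_path_iff_successively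
    by (auto simp: successively_append_iff)
  moreover have "ends (?x @ B @ ?y) = ends p" using \<open>?x \<noteq> []\<close> \<open>?y \<noteq> []\<close>
    by (simp add: ends_def)
  ultimately show ?thesis using \<open>set p = _\<close> by (intro exI[of _ "?x @ B @ ?y"]) auto
qed

definition path_system :: "nat \<Rightarrow> 'a set \<Rightarrow> ('a \<times> 'a) set \<Rightarrow> 'a \<Rightarrow> 'a \<Rightarrow> 'a list list \<Rightarrow> bool" where
  "path_system k V A u v Ps \<longleftrightarrow> length Ps = k \<and> distinct Ps \<and>
     (\<forall>p\<in>set Ps. is_path_from_to V A p u v \<or> is_path_from_to V A p v u) \<and>
     (\<forall>i<k. \<forall>j<k. i \<noteq> j \<longrightarrow> internal (Ps ! i) \<inter> internal (Ps ! j) = {})"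

definition cover :: "'a list list \<Rightarrow> 'a set" where
  "cover Ps = (\<Union>p\<in>set Ps. set p)"

definition detour_closed :: "('a \<times> 'a) set \<Rightarrow> 'a \<Rightarrow> 'a \<Rightarrow> 'a list list \<Rightarrow> bool" where
  "detour_closed A u v Ps \<longleftrightarrow>
     (\<forall>x y w. (x, y) \<in> {(u, v), (v, u)} \<longrightarrow> (x, w) \<in> A \<longrightarrow> (w, y) \<in> A \<longrightarrow> (x, y) \<in> ends ` set Ps)"

lemma weak_container_iff_path_system:
  "weak_container k V A u v Ps \<longleftrightarrow> path_system k V A u v Ps \<and> V \<subseteq> cover Ps"
  unfolding weak_container_def path_system_def cover_def by blast

lemma weak_container_swap: "weak_container k V A u v Ps \<longleftrightarrow> weak_container k V A v u Ps"
  unfolding weak_container_def by blast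

lemma path_system_path:
  assumes "path_system k V A u v Ps" "p \<in> set Ps"
  shows "is_path V A p" "ends p \<in> {(u, v), (v, u)}"
  using assms unfolding path_system_def is_path_from_to_def ends_def by auto

lemma path_system_cover_subset: "path_system k V A u v Ps \<Longrightarrow> cover Ps \<subseteq> V"
  using path_system_path(1)[of k V A u v Ps] unfolding cover_def is_path_def by blast

lemma path_system_ends_in_cover:
  assumes "path_system k V A u v Ps" "0 < k"
  shows "u \<in> cover Ps" "v \<in> cover Ps"
proof -
  have "Ps ! 0 \<in> set Ps" using assms by (simp add: path_system_def)
  moreover have "{u, v} \<subseteq> set (Ps ! 0)"
    using path_system_path[OF assms(1) calculation] hd_in_set last_in_set
    by (force simp: ends_def is_path_def)
  ultimately show "u \<in> cover Ps" "v \<in> cover Ps" unfolding cover_def by auto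
qed

lemma cover_list_update:
  assumes "i < length Ps" "set p' = set (Ps ! i) \<union> B"
  shows "cover (Ps[i := p']) = cover Ps \<union> B"
proof -
  have "cover Qs = (\<Union>j<length Qs. set (Qs ! j))" for Qs :: "'a list list"
    unfolding cover_def set_conv_nth by blast
  with assms show ?thesis by (auto simp: nth_list_update split: if_splits)
qed

lemma path_system_replace_path:
  assumes sys: "path_system k V A u v Ps" and i: "i < k"
    and p': "is_path V A p'" "ends p' = ends (Ps ! i)" "set p' = set (Ps ! i) \<union> B"
    and B: "B \<noteq> {}" "B \<inter> cover Ps = {}"
  shows "path_system k V A u v (Ps[i := p'])"
    and "ends ` set (Ps[i := p']) = ends ` set Ps"
    and "cover (Ps[i := p']) = cover Ps \<union> B"
proof -
  have len: "length Ps = k" using sys by (simp add: path_system_def)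
  have Pi: "Ps ! i \<in> set Ps" using i len by simp
  then have "is_path V A (Ps ! i)" by (rule path_system_path(1)[OF sys])
  moreover have "B \<inter> set (Ps ! i) = {}" using Pi B(2) unfolding cover_def by blast
  ultimately have internal_p': "internal p' = internal (Ps ! i) \<union> B"
    by (rule internal_extended_path[OF _ p'])
  have internal_cover: "internal (Ps ! j) \<subseteq> cover Ps" if "j < k" for j
    using internal_subset that len unfolding cover_def by fastforce
  have "p' \<notin> set Ps" using p'(3) B unfolding cover_def by auto
  then have "distinct (Ps[i := p'])"
    using sys by (simp add: path_system_def distinct_list_update)
  moreover have "\<forall>p\<in>set (Ps[i := p']). is_path_from_to V A p u v \<or> is_path_from_to V A p v u"
  proof -
    have "is_path_from_to V A (Ps ! i) u v \<or> is_path_from_to V A (Ps ! i) v u"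
      using sys Pi by (simp add: path_system_def)
    then have "is_path_from_to V A p' u v \<or> is_path_from_to V A p' v u"
      using p'(1,2) by (auto simp: is_path_from_to_def ends_def)
    then show ?thesis
      using sys set_update_subset_insert[of Ps i p'] unfolding path_system_def by blast
  qed
  moreover have "internal (Ps[i := p'] ! a) \<inter> internal (Ps[i := p'] ! c) = {}"
    if "a < k" "c < k" "a \<noteq> c" for a c
  proof -
    have "internal (Ps[i := p'] ! j) = internal (Ps ! j) \<union> (if j = i then B else {})"
      if "j < k" for j
      using internal_p' len that by (simp add: nth_list_update)
    moreover have "internal (Ps ! a) \<inter> internal (Ps ! c) = {}"
      using sys that unfolding path_system_def by blast
    ultimately show ?thesis
      using that internal_cover[OF that(1)] internal_cover[OF that(2)] B(2) by auto
  qed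
  ultimately show "path_system k V A u v (Ps[i := p'])"
    using len unfolding path_system_def by simp
  have "map ends (Ps[i := p']) = map ends Ps"
    using p'(2) i len list_update_id[of "map ends Ps" i] by (simp add: map_update)
  then show "ends ` set (Ps[i := p']) = ends ` set Ps"
    by (metis set_map)
  show "cover (Ps[i := p']) = cover Ps \<union> B"
    using i len p'(3) by (intro cover_list_update) simp_all
qed

lemma path_system_enlarge_path:
  assumes sys: "path_system k V A u v Ps" and closed: "detour_closed A u v Ps" and i: "i < k"
    and p': "is_path V A p'" "ends p' = ends (Ps ! i)" "set p' = set (Ps ! i) \<union> B"
    and B: "B \<noteq> {}" "B \<inter> cover Ps = {}"
  shows "\<exists>Ps'. path_system k V A u v Ps' \<and> detour_closed A u v Ps' \<and> cover Ps \<subset> cover Ps'"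
proof (intro exI conjI)
  note replaced = path_system_replace_path[OF sys i p' B]
  show "path_system k V A u v (Ps[i := p'])" by (fact replaced(1))
  show "detour_closed A u v (Ps[i := p'])"
    using closed replaced(2) by (simp add: detour_closed_def)
  show "cover Ps \<subset> cover (Ps[i := p'])"
    using replaced(3) B by blast
qed

lemma card_internal_short_paths:
  "\<forall>p\<in>set ps. length p \<le> 4 \<Longrightarrow> card (\<Union>p\<in>set ps. internal p) \<le> 2 * length ps"
proof (induction ps)
  case (Cons p ps)
  have "card (internal p) \<le> length (butlast (tl p))"
    unfolding internal_def by (rule card_length)
  with Cons.prems have "card (internal p) \<le> 2" by (simp, linarith)
  moreover have "card (\<Union>q\<in>set (p # ps). internal q) \<le> card (internal p) + card (\<Union>q\<in>set ps. internal q)"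
    by (simp add: card_Un_le)
  ultimately show ?case using Cons by simp
qed simp

definition detours :: "'a set \<Rightarrow> ('a \<times> 'a) set \<Rightarrow> 'a \<Rightarrow> 'a \<Rightarrow> 'a list list \<Rightarrow> bool" where
  "detours V A u v ps \<longleftrightarrow>
     (\<forall>p\<in>set ps. (is_path_from_to V A p u v \<or> is_path_from_to V A p v u) \<and> 3 \<le> length p \<and> length p \<le> 4) \<and>
     distinct (concat (map (\<lambda>p. butlast (tl p)) ps))"

lemma path_system_of_detours:
  assumes uv: "is_path V A [u, v]" and ps: "detours V A u v ps"
  shows "path_system (Suc (length ps)) V A u v ([u, v] # ps)"
proof -
  define xs where "xs = [] # map (\<lambda>p. butlast (tl p)) ps"
  have internal_xs: "internal (([u, v] # ps) ! i) = set (xs ! i)" if "i < Suc (length ps)" for i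
    using that by (cases i) (simp_all add: xs_def internal_def)
  have "distinct (concat xs)" using ps by (simp add: xs_def detours_def)
  then have disjoint: "internal (([u, v] # ps) ! i) \<inter> internal (([u, v] # ps) ! j) = {}"
    if "i < Suc (length ps)" "j < Suc (length ps)" "i \<noteq> j" for i j
    using distinct_concat_nth_disjoint[of xs i j] that internal_xs by (simp add: xs_def)
  have long: "3 \<le> length p" if "p \<in> set ps" for p
    using ps that by (simp add: detours_def)
  have "distinct ps"
    unfolding distinct_conv_nth
  proof (intro allI impI notI)
    fix i j assume ij: "i < length ps" "j < length ps" "i \<noteq> j" and eq: "ps ! i = ps ! j"
    have "internal (ps ! i) = {}" using disjoint[of "Suc i" "Suc j"] ij eq by simp
    then have "length (butlast (tl (ps ! i))) = 0" by (simp add: internal_def)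
    moreover have "3 \<le> length (ps ! i)" using long ij(1) by simp
    ultimately show False by simp
  qed
  moreover have "[u, v] \<notin> set ps" using long by force
  moreover have "\<forall>p\<in>set ([u, v] # ps). is_path_from_to V A p u v \<or> is_path_from_to V A p v u"
    using uv ps by (simp add: detours_def is_path_from_to_def)
  ultimately show ?thesis
    using disjoint unfolding path_system_def by simp
qed

definition insertable :: "('a \<times> 'a) set \<Rightarrow> 'a \<Rightarrow> 'a list \<Rightarrow> bool" where
  "insertable A z p \<longleftrightarrow> (\<exists>a b. a < b \<and> b < length p \<and> (p ! a, z) \<in> A \<and> (z, p ! b) \<in> A)"

lemma insertable_ends:
  assumes "p \<noteq> []" "hd p \<noteq> last p" "(hd p, z) \<in> A" "(z, last p) \<in> A"
  shows "insertable A z p"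
proof -
  have "0 < length p - 1" using assms(1,2) by (cases p) auto
  with assms show ?thesis
    unfolding insertable_def by (metis diff_less hd_conv_nth last_conv_nth length_greater_0_conv zero_less_one)
qed

locale tournament_digraph =
  fixes V :: "'a set" and A :: "('a \<times> 'a) set"
  assumes tournament: "tournament V A"
begin

lemma arc_vertices: "(a, b) \<in> A \<Longrightarrow> a \<in> V \<and> b \<in> V"
  using tournament unfolding tournament_def by blast

lemma arc_irrefl: "(a, a) \<notin> A"
  using tournament unfolding tournament_def by blast

lemma arc_asym:
  assumes "(a, b) \<in> A"
  shows "(b, a) \<notin> A"
proof (cases "a = b")
  case True
  with arc_irrefl show ?thesis by simp
next
  case False
  with assms arc_vertices[OF assms] tournament show ?thesis unfolding tournament_def by blast
qed

lemma arc_total: "a \<in> V \<Longrightarrow> b \<in> V \<Longrightarrow> a \<noteq> b \<Longrightarrow> (a, b) \<in> A \<or> (b, a) \<in> A"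
  using tournament unfolding tournament_def by blast

lemma is_path_of_two_arcs: "(x, y) \<in> A \<Longrightarrow> (y, z) \<in> A \<Longrightarrow> x \<noteq> z \<Longrightarrow> is_path V A [x, y, z]"
  using arc_vertices arc_irrefl by (auto simp: is_path_iff_successively)

lemma is_path_of_three_arcs:
  "(x, y) \<in> A \<Longrightarrow> (y, z) \<in> A \<Longrightarrow> (z, t) \<in> A \<Longrightarrow> distinct [x, y, z, t] \<Longrightarrow> is_path V A [x, y, z, t]"
  using arc_vertices by (auto simp: is_path_iff_successively)

lemma insertable_consecutive:
  assumes p: "is_path V A p" and z: "z \<in> V - set p" and ins: "insertable A z p"
  shows "\<exists>l. Suc l < length p \<and> (p ! l, z) \<in> A \<and> (z, p ! Suc l) \<in> A"
proof -
  obtain a b where ab: "a < b" "b < length p" "(p ! a, z) \<in> A" "(z, p ! b) \<in> A"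
    using ins unfolding insertable_def by blast
  then obtain l where l: "l < b" "(p ! l, z) \<in> A" "(p ! Suc l, z) \<notin> A"
    using nat_crossing[of "\<lambda>l. (p ! l, z) \<in> A" a b] arc_asym by auto
  have "p ! Suc l \<in> V - {z}" using p z l(1) ab(2) unfolding is_path_def by auto
  with l z arc_total show ?thesis using ab(2) by fastforce
qed

lemma insertable_extend_path:
  assumes p: "is_path V A p" and z: "z \<in> V - set p" and ins: "insertable A z p"
  shows "\<exists>p'. is_path V A p' \<and> ends p' = ends p \<and> set p' = insert z (set p)"
proof -
  obtain l where l: "Suc l < length p" "(p ! l, z) \<in> A" "(z, p ! Suc l) \<in> A"
    using insertable_consecutive[OF assms] by blast
  have "is_path V A [z]" "set [z] \<inter> set p = {}" using z by (simp_all add: is_path_def)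
  from is_path_insert_block[OF p l(1) this] l(2,3) show ?thesis by simp
qed

lemma not_insertable_dominated:
  assumes p: "is_path V A p" and z: "z \<in> V - set p" and stuck: "\<not> insertable A z p"
    and first: "(hd p, z) \<in> A" and c: "c \<in> set p"
  shows "(c, z) \<in> A"
proof -
  obtain j where j: "j < length p" "c = p ! j" using c by (auto simp: in_set_conv_nth)
  have first': "(p ! 0, z) \<in> A" using p first by (simp add: hd_conv_nth is_path_def)
  show ?thesis
  proof (cases "j = 0")
    case True
    with j(2) first' show ?thesis by simp
  next
    case False
    with j(1) first' stuck have "(z, p ! j) \<notin> A" unfolding insertable_def by blast
    moreover have "c \<in> V" "z \<in> V" "c \<noteq> z" using p z c by (auto simp: is_path_def)
    ultimately show ?thesis using arc_total j(2) by blast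
  qed
qed

lemma not_insertable_dominating:
  assumes p: "is_path V A p" and z: "z \<in> V - set p" and stuck: "\<not> insertable A z p"
    and final: "(z, last p) \<in> A" and c: "c \<in> set p"
  shows "(z, c) \<in> A"
proof -
  obtain j where j: "j < length p" "c = p ! j" using c by (auto simp: in_set_conv_nth)
  have final': "(z, p ! (length p - 1)) \<in> A" using p final by (simp add: last_conv_nth is_path_def)
  show ?thesis
  proof (cases "j = length p - 1")
    case True
    with j(2) final' show ?thesis by simp
  next
    case False
    with j(1) have "j < length p - 1" "length p - 1 < length p" by auto
    with final' stuck have "(p ! j, z) \<notin> A" unfolding insertable_def by blast
    moreover have "c \<in> V" "z \<in> V" "c \<noteq> z" using p z c by (auto simp: is_path_def)
    ultimately show ?thesis using arc_total j(2) by blast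
  qed
qed

lemma arc_from_dominated_to_dominating:
  assumes sc: "strongly_connected V A" and C: "C \<subseteq> V" "c0 \<in> C" and w: "w \<in> V - C"
    and dichotomy: "\<And>z. z \<in> V - C \<Longrightarrow> (\<forall>c\<in>C. (c, z) \<in> A) \<or> (\<forall>c\<in>C. (z, c) \<in> A)"
  shows "\<exists>x y. x \<in> V - C \<and> y \<in> V - C \<and> (\<forall>c\<in>C. (c, x) \<in> A) \<and> (\<forall>c\<in>C. (y, c) \<in> A) \<and> (x, y) \<in> A"
proof -
  define D where "D = {z \<in> V - C. \<forall>c\<in>C. (c, z) \<in> A}"
  define E where "E = {z \<in> V - C. \<forall>c\<in>C. (z, c) \<in> A}"
  have c0: "c0 \<in> V" "c0 \<notin> D" "c0 \<notin> E" using C arc_irrefl unfolding D_def E_def by auto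
  have "\<exists>x y. x \<in> D \<and> y \<in> E \<and> (x, y) \<in> A"
  proof (cases "w \<in> D")
    case True
    then obtain x y where "x \<in> V \<inter> D" "y \<in> V - D" "(x, y) \<in> A"
      using strongly_connected_arc_leaving[OF sc _ c0(1), of w D] w c0(2) by blast
    moreover from this have "y \<notin> C" using arc_asym unfolding D_def by blast
    ultimately show ?thesis using dichotomy unfolding D_def E_def by blast
  next
    case False
    then have "w \<in> E" using dichotomy w unfolding D_def E_def by blast
    then obtain x y where "x \<in> V - E" "y \<in> V \<inter> E" "(x, y) \<in> A"
      using strongly_connected_arc_leaving[OF sc c0(1), of w "- E"] w c0(3) by blast
    moreover from this have "x \<notin> C" using arc_asym unfolding E_def by blast
    ultimately show ?thesis using dichotomy unfolding D_def E_def by blast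
  qed
  then show ?thesis unfolding D_def E_def by blast
qed

lemma uncovered_dominance:
  assumes sys: "path_system k V A u v Ps" and closed: "detour_closed A u v Ps"
    and uv: "u \<noteq> v" and k: "0 < k"
    and z: "z \<in> V - cover Ps" and stuck: "\<forall>p\<in>set Ps. \<not> insertable A z p"
  shows "(\<forall>c\<in>cover Ps. (c, z) \<in> A) \<or> (\<forall>c\<in>cover Ps. (z, c) \<in> A)"
proof -
  have paths: "is_path V A p" "ends p \<in> {(u, v), (v, u)}" "z \<in> V - set p" if "p \<in> set Ps" for p
    using path_system_path[OF sys that] z that unfolding cover_def by auto
  have not_between: "\<not> ((x, z) \<in> A \<and> (z, y) \<in> A)" if "(x, y) \<in> {(u, v), (v, u)}" for x y
  proof
    assume between: "(x, z) \<in> A \<and> (z, y) \<in> A"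
    then have "(x, y) \<in> ends ` set Ps"
      using closed[unfolded detour_closed_def, rule_format, OF that] by blast
    then obtain p where p: "p \<in> set Ps" "ends p = (x, y)" by (metis imageE)
    have "p \<noteq> []" using paths(1)[OF p(1)] by (simp add: is_path_def)
    moreover have "x \<noteq> y" using that uv by auto
    ultimately have "insertable A z p"
      using p(2) between by (intro insertable_ends) (simp_all add: ends_def)
    with stuck p(1) show False by blast
  qed
  have "u \<in> V" "v \<in> V" "z \<noteq> u" "z \<noteq> v"
    using path_system_ends_in_cover[OF sys k] path_system_cover_subset[OF sys] z by auto
  then consider "(u, z) \<in> A" "(v, z) \<in> A" | "(z, u) \<in> A" "(z, v) \<in> A"
    using arc_total[of u z] arc_total[of v z] not_between[of u v] not_between[of v u] z by auto
  then show ?thesis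
  proof cases
    case 1
    have "(c, z) \<in> A" if "p \<in> set Ps" "c \<in> set p" for p c
    proof (rule not_insertable_dominated[OF paths(1,3)[OF that(1)]])
      show "\<not> insertable A z p" using stuck that(1) by blast
      show "(hd p, z) \<in> A" using paths(2)[OF that(1)] 1 by (auto simp: ends_def)
    qed fact
    then show ?thesis unfolding cover_def by blast
  next
    case 2
    have "(z, c) \<in> A" if "p \<in> set Ps" "c \<in> set p" for p c
    proof (rule not_insertable_dominating[OF paths(1,3)[OF that(1)]])
      show "\<not> insertable A z p" using stuck that(1) by blast
      show "(z, last p) \<in> A" using paths(2)[OF that(1)] 2 by (auto simp: ends_def)
    qed fact
    then show ?thesis unfolding cover_def by blast
  qed
qed

lemma path_system_absorb_arc:
  assumes sys: "path_system k V A u v Ps" and closed: "detour_closed A u v Ps"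
    and uv: "u \<noteq> v" and k: "0 < k"
    and x: "x \<in> V - cover Ps" "\<forall>c\<in>cover Ps. (c, x) \<in> A"
    and y: "y \<in> V - cover Ps" "\<forall>c\<in>cover Ps. (y, c) \<in> A" and xy: "(x, y) \<in> A"
  shows "\<exists>Ps'. path_system k V A u v Ps' \<and> detour_closed A u v Ps' \<and> cover Ps \<subset> cover Ps'"
proof -
  let ?q = "Ps ! 0"
  have q: "?q \<in> set Ps" using sys k by (simp add: path_system_def)
  note q_path = path_system_path[OF sys q]
  have "hd ?q \<noteq> last ?q" "?q \<noteq> []"
    using q_path uv by (auto simp: ends_def is_path_def)
  then have "Suc 0 < length ?q" by (cases ?q) auto
  then have "?q ! 0 \<in> set ?q" "?q ! Suc 0 \<in> set ?q"
    by (meson Suc_lessD nth_mem)+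
  then have arcs: "(?q ! 0, hd [x, y]) \<in> A" "(last [x, y], ?q ! Suc 0) \<in> A"
    using q x(2) y(2) unfolding cover_def by auto
  have "is_path V A [x, y]"
    using x y xy arc_irrefl by (auto simp: is_path_def nth_Cons split: nat.splits)
  moreover have "set [x, y] \<inter> set ?q = {}" using x y q unfolding cover_def by auto
  ultimately obtain p' where p': "is_path V A p'" "ends p' = ends ?q" "set p' = set ?q \<union> {x, y}"
    using is_path_insert_block[OF q_path(1) \<open>Suc 0 < length ?q\<close> _ _ arcs] by auto
  show ?thesis
    by (rule path_system_enlarge_path[OF sys closed k p']) (use x y in auto)
qed

lemma path_system_cover_grows:
  assumes sc: "strongly_connected V A" and sys: "path_system k V A u v Ps"
    and closed: "detour_closed A u v Ps" and uv: "u \<noteq> v" and k: "0 < k"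
    and w: "w \<in> V - cover Ps"
  shows "\<exists>Ps'. path_system k V A u v Ps' \<and> detour_closed A u v Ps' \<and> cover Ps \<subset> cover Ps'"
proof (cases "\<exists>z\<in>V - cover Ps. \<exists>p\<in>set Ps. insertable A z p")
  case True
  have len: "length Ps = k" using sys by (simp add: path_system_def)
  with True obtain z i where z: "z \<in> V - cover Ps" and i: "i < k" and ins: "insertable A z (Ps ! i)"
    by (metis in_set_conv_nth)
  have "is_path V A (Ps ! i)" using sys i len by (simp add: path_system_path)
  moreover have "z \<in> V - set (Ps ! i)" using z i len unfolding cover_def by auto
  ultimately obtain p' where p': "is_path V A p'" "ends p' = ends (Ps ! i)" "set p' = set (Ps ! i) \<union> {z}"
    using insertable_extend_path ins by fastforce
  show ?thesis
    by (rule path_system_enlarge_path[OF sys closed i p']) (use z in auto)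
next
  case False
  have dichotomy: "(\<forall>c\<in>cover Ps. (c, z) \<in> A) \<or> (\<forall>c\<in>cover Ps. (z, c) \<in> A)"
    if z: "z \<in> V - cover Ps" for z
  proof (rule uncovered_dominance[OF sys closed uv k z])
    show "\<forall>p\<in>set Ps. \<not> insertable A z p" using False z by blast
  qed
  have "u \<in> cover Ps" "cover Ps \<subseteq> V"
    using path_system_ends_in_cover[OF sys k] path_system_cover_subset[OF sys] by auto
  from arc_from_dominated_to_dominating[OF sc this(2,1) w dichotomy]
  obtain x y where "x \<in> V - cover Ps" "\<forall>c\<in>cover Ps. (c, x) \<in> A"
    and "y \<in> V - cover Ps" "\<forall>c\<in>cover Ps. (y, c) \<in> A" and "(x, y) \<in> A"
    by blast
  then show ?thesis by (rule path_system_absorb_arc[OF sys closed uv k])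
qed

lemma path_system_exhaustive:
  assumes sc: "strongly_connected V A" and uv: "u \<noteq> v" and k: "0 < k"
  shows "path_system k V A u v Ps \<Longrightarrow> detour_closed A u v Ps \<Longrightarrow>
    \<exists>Ps'. path_system k V A u v Ps' \<and> V \<subseteq> cover Ps'"
proof (induction "card (V - cover Ps)" arbitrary: Ps rule: less_induct)
  case less
  show ?case
  proof (cases "V \<subseteq> cover Ps")
    case False
    then obtain w where "w \<in> V - cover Ps" by blast
    then obtain Ps' where Ps': "path_system k V A u v Ps'" "detour_closed A u v Ps'" "cover Ps \<subset> cover Ps'"
      using path_system_cover_grows[OF sc less.prems uv k] by blast
    have "V - cover Ps' \<subset> V - cover Ps"
      using Ps'(3) path_system_cover_subset[OF Ps'(1)] by blast
    moreover have "finite V" using tournament by (simp add: tournament_def)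
    ultimately have "card (V - cover Ps') < card (V - cover Ps)"
      by (meson finite_Diff psubset_card_mono)
    with less.hyps Ps'(1,2) show ?thesis by blast
  qed (use less.prems in blast)
qed

lemma short_detour_avoiding:
  assumes uv: "(u, v) \<in> A" and sc: "strongly_connected (V - S) A" and "u \<notin> S" "v \<notin> S"
  shows "\<exists>p. (is_path_from_to V A p u v \<or> is_path_from_to V A p v u) \<and>
    3 \<le> length p \<and> length p \<le> 4 \<and> set p \<inter> S = {}"
proof -
  have uvV: "u \<in> V - S" "v \<in> V - S" using arc_vertices[OF uv] assms(3,4) by auto
  have "u \<noteq> v" using uv arc_irrefl by auto
  obtain a b where a: "a \<in> V - S" "a = v \<or> (u, a) \<in> A \<and> (v, a) \<in> A"
    and b: "b \<in> V - S" "b \<noteq> v" "\<not> ((u, b) \<in> A \<and> (v, b) \<in> A)" and ab: "(a, b) \<in> A"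
    using strongly_connected_arc_leaving[OF sc uvV(2,1), of "insert v {w. (u, w) \<in> A \<and> (v, w) \<in> A}"]
      \<open>u \<noteq> v\<close> arc_irrefl by auto
  have vu: "(v, u) \<notin> A" using arc_asym[OF uv] .
  consider "(v, b) \<in> A" | "(b, v) \<in> A" "(u, b) \<in> A" | "(b, v) \<in> A" "(u, b) \<notin> A"
    using arc_total[of v b] uvV b by blast
  then show ?thesis
  proof cases
    case 1
    then have "(b, u) \<in> A" using arc_total[of b u] uvV b vu by auto
    with 1 have "is_path V A [v, b, u]" using uv arc_irrefl by (intro is_path_of_two_arcs) auto
    then show ?thesis using uvV b by (intro exI[of _ "[v, b, u]"]) (simp add: is_path_from_to_def)
  next
    case 2
    then have "is_path V A [u, b, v]" using uv arc_irrefl by (intro is_path_of_two_arcs) auto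
    then show ?thesis using uvV b by (intro exI[of _ "[u, b, v]"]) (simp add: is_path_from_to_def)
  next
    case 3
    then have "a \<noteq> v" using ab arc_asym by blast
    with a have "(u, a) \<in> A" "(v, a) \<in> A" by auto
    then have "distinct [u, a, b, v]" using 3 ab uv arc_irrefl arc_asym by auto
    then have "is_path V A [u, a, b, v]" using \<open>(u, a) \<in> A\<close> ab 3 by (intro is_path_of_three_arcs)
    then show ?thesis using uvV a b by (intro exI[of _ "[u, a, b, v]"]) (simp add: is_path_from_to_def)
  qed
qed

lemma detours_extend:
  assumes ms: "m_strong (2 * k + 1) V A" and uv: "(u, v) \<in> A"
    and ps: "detours V A u v ps" and len: "length ps \<le> k"
  shows "\<exists>p. detours V A u v (p # ps)"
proof -
  define S where "S = (\<Union>p\<in>set ps. internal p)"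
  have paths: "p \<noteq> []" "distinct p" "set p \<subseteq> V" "ends p \<in> {(u, v), (v, u)}" "length p \<le> 4"
    if "p \<in> set ps" for p
    using ps that unfolding detours_def is_path_from_to_def is_path_def ends_def by auto
  have "card S \<le> 2 * length ps"
    unfolding S_def by (rule card_internal_short_paths) (use paths(5) in blast)
  with len have card: "card S < 2 * k + 1" by simp
  have "internal p \<subseteq> V" if "p \<in> set ps" for p
    using internal_subset paths(3)[OF that] by (rule order_trans)
  then have "S \<subseteq> V" unfolding S_def by blast
  with card have "strongly_connected (V - S) A"
    using ms unfolding m_strong_def by blast
  moreover have "u \<notin> S" "v \<notin> S"
  proof -
    have "u \<notin> internal p \<and> v \<notin> internal p" if "p \<in> set ps" for p
    proof -
      have "{hd p, last p} = {u, v}" using paths(4)[OF that] by (auto simp: ends_def)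
      with internal_eq[OF paths(2,1)[OF that]] show ?thesis by auto
    qed
    then show "u \<notin> S" "v \<notin> S" unfolding S_def by blast+
  qed
  ultimately obtain p where p: "is_path_from_to V A p u v \<or> is_path_from_to V A p v u"
    "3 \<le> length p" "length p \<le> 4" "set p \<inter> S = {}"
    using short_detour_avoiding[OF uv] by blast
  have "distinct p" using p(1) by (auto simp: is_path_from_to_def is_path_def)
  then have "distinct (butlast (tl p))" by (simp add: distinct_butlast distinct_tl)
  moreover have "set (butlast (tl p)) \<inter> S = {}"
    using p(4) internal_subset[of p] unfolding internal_def by blast
  moreover have "set (concat (map (\<lambda>p. butlast (tl p)) ps)) = S"
    unfolding S_def internal_def by simp
  ultimately have "distinct (concat (map (\<lambda>p. butlast (tl p)) (p # ps)))"
    using ps by (simp add: detours_def)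
  with p(1-3) ps show ?thesis unfolding detours_def by (intro exI[of _ p]) simp
qed

lemma detours_of_length:
  assumes ms: "m_strong (2 * k + 1) V A" and uv: "(u, v) \<in> A"
    and ps0: "detours V A u v ps0" and m: "length ps0 \<le> m" "m \<le> k + 1"
  shows "\<exists>ps. detours V A u v ps \<and> length ps = m \<and> set ps0 \<subseteq> set ps"
  using m
proof (induction m rule: dec_induct)
  case base
  with ps0 show ?case by blast
next
  case (step m)
  then obtain ps where "detours V A u v ps" "length ps = m" "set ps0 \<subseteq> set ps" by auto
  moreover from this obtain p where "detours V A u v (p # ps)"
    using detours_extend[OF ms uv] step.hyps(2) step.prems by fastforce
  ultimately show ?case by (intro exI[of _ "p # ps"]) auto
qed

lemma initial_path_system:
  assumes ms: "m_strong (2 * k + 1) V A" and uv: "(u, v) \<in> A"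
  shows "\<exists>Ps. path_system (k + 2) V A u v Ps \<and> detour_closed A u v Ps"
proof -
  obtain ps0 where ps0: "detours V A u v ps0" "length ps0 \<le> 1"
    and seed: "\<And>w. (v, w) \<in> A \<Longrightarrow> (w, u) \<in> A \<Longrightarrow> (v, u) \<in> ends ` set ps0"
  proof (cases "\<exists>w. (v, w) \<in> A \<and> (w, u) \<in> A")
    case True
    then obtain w where w: "(v, w) \<in> A" "(w, u) \<in> A" by blast
    with uv arc_irrefl have "is_path V A [v, w, u]" by (intro is_path_of_two_arcs) auto
    then have "detours V A u v [[v, w, u]]" by (simp add: detours_def is_path_from_to_def)
    with that show ?thesis by (simp add: ends_def)
  next
    case False
    show ?thesis by (rule that[of "[]"]) (use False in \<open>auto simp: detours_def\<close>)
  qed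
  obtain ps where ps: "detours V A u v ps" "length ps = k + 1" "set ps0 \<subseteq> set ps"
    using detours_of_length[OF ms uv ps0(1), of "k + 1"] ps0(2) by auto
  have "is_path V A [u, v]" using uv arc_vertices arc_irrefl by (auto simp: is_path_iff_successively)
  from path_system_of_detours[OF this ps(1)] ps(2)
  have "path_system (k + 2) V A u v ([u, v] # ps)" by simp
  moreover have "detour_closed A u v ([u, v] # ps)"
    using seed ps(3) unfolding detour_closed_def by (auto simp: ends_def)
  ultimately show ?thesis by blast
qed

lemma weak_container_of_arc:
  assumes ms: "m_strong (2 * k + 1) V A" and uv: "(u, v) \<in> A"
  shows "\<exists>Ps. weak_container (k + 2) V A u v Ps"
proof -
  have "strongly_connected V A" using ms by (simp add: m_strong_strongly_connected)
  moreover have "u \<noteq> v" using uv arc_irrefl by auto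
  moreover obtain Ps where "path_system (k + 2) V A u v Ps" "detour_closed A u v Ps"
    using initial_path_system[OF ms uv] by blast
  ultimately show ?thesis
    using path_system_exhaustive[of u v "k + 2"] by (auto simp: weak_container_iff_path_system)
qed

end

theorem theorem2p7:
  fixes V :: "'a set" and A :: "('a \<times> 'a) set" and k :: nat
  assumes "tournament V A"
    and "m_strong (2 * k + 1) V A"
  shows "weakly_star_connected (k + 2) V A"
  unfolding weakly_star_connected_def
proof (intro ballI impI)
  interpret tournament_digraph V A using assms(1) by unfold_locales
  fix u v assume "u \<in> V" "v \<in> V" "u \<noteq> v"
  then consider "(u, v) \<in> A" | "(v, u) \<in> A" using arc_total[of u v] by blast
  then show "\<exists>Ps. weak_container (k + 2) V A u v Ps"
  proof cases
    case 1
    then show ?thesis by (rule weak_container_of_arc[OF assms(2)])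
  next
    case 2
    then obtain Ps where "weak_container (k + 2) V A v u Ps"
      using weak_container_of_arc[OF assms(2)] by blast
    then have "weak_container (k + 2) V A u v Ps"
      using weak_container_swap[of "k + 2" V A u v] by simp
    then show ?thesis by blast
  qed
qed

end
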